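(* Let $k\ge1$ be odd and, with $S,T,T_\omega=\begin{psmallmatrix}1&i\\0&1\end{psmallmatrix},L=\begin{psmallmatrix}i&0\\0&-i\end{psmallmatrix},U=TS,E=T_\omega SL$, let $W_{k,k}=\ker(\mathbf{1}+S)\cap\ker(\mathbf{1}-L)\cap\ker(\mathbf{1}+U+U^2)\cap\ker(\mathbf{1}+E+E^2)\subset V_{k,k}$. Let $\varepsilon_1=\begin{psmallmatrix}i&0\\0&1\end{psmallmatrix}$, so $P|\varepsilon_1=P(iz,\bar i\bar z)$. Then $W_{k,k}|\varepsilon_1=W_{k,k}$, and consequently $$W_{k,k}=W_{k,k}^{1}\oplus W_{k,k}^{-1}\oplus W_{k,k}^{i}\oplus W_{k,k}^{-i},$$ where $W_{k,k}^e=W_{k,k}\cap V_{k,k}^e$ and $V_{k,k}^e=\{P\in V_{k,k}:P(iz,\bar i\bar z)=eP(z,\bar z)\}$ for $e\in\{\pm1,\pm i\}$.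
   Context: $S=\begin{psmallmatrix}0&-1\\1&0\end{psmallmatrix}$, $T=\begin{psmallmatrix}1&1\\0&1\end{psmallmatrix}$. $V_{k,k}$ is the space of polynomials $\sum_{0\le i,j\le k}c_{ij}z^i\bar z^j$ over $\mathbb{C}$ with right action $(P|\gamma)(z,\bar z)=(cz+e)^k\overline{(cz+e)}^kP\!\left(\frac{az+b}{cz+e},\frac{\bar a\bar z+\bar b}{\bar c\bar z+\bar e}\right)$ for $\gamma=\begin{psmallmatrix}a&b\\c&e\end{psmallmatrix}$, extended linearly to the group ring; $\ker(X)=\{P:P|X=0\}$, and $W|\varepsilon_1=\{P|\varepsilon_1:P\in W\}$. *)

theory Defs
  imports Complex_Main
begin

text \<open>2x2 complex matrices (a b; c e) represented as quadruples (a, b, c, e).\<close>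
type_synonym mat2 = "complex \<times> complex \<times> complex \<times> complex"

fun mmul :: "mat2 \<Rightarrow> mat2 \<Rightarrow> mat2" where
  "mmul (a, b, c, e) (a', b', c', e') =
     (a*a' + b*c', a*b' + b*e', c*a' + e*c', c*b' + e*e')"

definition mI :: mat2 where "mI = (1, 0, 0, 1)"
definition mS :: mat2 where "mS = (0, -1, 1, 0)"
definition mT :: mat2 where "mT = (1, 1, 0, 1)"
definition mTw :: mat2 where "mTw = (1, \<i>, 0, 1)"
definition mL :: mat2 where "mL = (\<i>, 0, 0, -\<i>)"
definition mU :: mat2 where "mU = mmul mT mS"
definition mE :: mat2 where "mE = mmul (mmul mTw mS) mL"
definition eps1 :: mat2 where "eps1 = (\<i>, 0, 0, 1)"

text \<open>Elements of V_{k,k} are represented as functions P(z, w) of two complex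
  variables, w standing for the conjugate variable \<open>\<bar>z\<close>.\<close>
definition poly2 :: "nat \<Rightarrow> (nat \<Rightarrow> nat \<Rightarrow> complex) \<Rightarrow> complex \<Rightarrow> complex \<Rightarrow> complex" where
  "poly2 k c = (\<lambda>z w. \<Sum>i\<le>k. \<Sum>j\<le>k. c i j * z ^ i * w ^ j)"

definition Vkk :: "nat \<Rightarrow> (complex \<Rightarrow> complex \<Rightarrow> complex) set" where
  "Vkk k = {P. \<exists>c. P = poly2 k c}"

definition coeffs2 :: "nat \<Rightarrow> (complex \<Rightarrow> complex \<Rightarrow> complex) \<Rightarrow> nat \<Rightarrow> nat \<Rightarrow> complex" where
  "coeffs2 k P = (SOME c. P = poly2 k c)"

text \<open>Slash action: polynomial form of
  (cz+e)^k conj(cz+e)^k P((az+b)/(cz+e), conj((az+b)/(cz+e))).\<close>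
definition slash :: "nat \<Rightarrow> (complex \<Rightarrow> complex \<Rightarrow> complex) \<Rightarrow> mat2 \<Rightarrow> complex \<Rightarrow> complex \<Rightarrow> complex" where
  "slash k P g = (case g of (a, b, c, e) \<Rightarrow>
     (\<lambda>z w. \<Sum>i\<le>k. \<Sum>j\<le>k. coeffs2 k P i j
        * (a*z + b) ^ i * (c*z + e) ^ (k - i)
        * (cnj a * w + cnj b) ^ j * (cnj c * w + cnj e) ^ (k - j)))"

text \<open>Group ring elements as formal sums: lists of (coefficient, matrix).\<close>
definition slashR :: "nat \<Rightarrow> (complex \<Rightarrow> complex \<Rightarrow> complex) \<Rightarrow> (complex \<times> mat2) list
    \<Rightarrow> complex \<Rightarrow> complex \<Rightarrow> complex" where
  "slashR k P X = (\<lambda>z w. \<Sum>(n, g)\<leftarrow>X. n * slash k P g z w)"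

definition kerR :: "nat \<Rightarrow> (complex \<times> mat2) list \<Rightarrow> (complex \<Rightarrow> complex \<Rightarrow> complex) set" where
  "kerR k X = {P \<in> Vkk k. slashR k P X = (\<lambda>z w. 0)}"

definition Wkk :: "nat \<Rightarrow> (complex \<Rightarrow> complex \<Rightarrow> complex) set" where
  "Wkk k = kerR k [(1, mI), (1, mS)]
         \<inter> kerR k [(1, mI), (-1, mL)]
         \<inter> kerR k [(1, mI), (1, mU), (1, mmul mU mU)]
         \<inter> kerR k [(1, mI), (1, mE), (1, mmul mE mE)]"

definition Vkk_e :: "nat \<Rightarrow> complex \<Rightarrow> (complex \<Rightarrow> complex \<Rightarrow> complex) set" where
  "Vkk_e k e = {P \<in> Vkk k. \<forall>z w. P (\<i> * z) (cnj \<i> * w) = e * P z w}"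

definition Wkk_e :: "nat \<Rightarrow> complex \<Rightarrow> (complex \<Rightarrow> complex \<Rightarrow> complex) set" where
  "Wkk_e k e = Wkk k \<inter> Vkk_e k e"

end

(*
  The slash action is a right action of invertible matrices in which scalars of modulus one act
  trivially; the cocycle identity P|g|h = P|gh is checked on the rational form of the action away
  from its finitely many poles, which suffices because elements of V are polynomials.
  Conjugation by eps1 = diag(i, 1) permutes the relations defining W up to such scalars:
  eps1 S = -(S L) eps1, eps1 L = L eps1, eps1 U = -E eps1 and eps1 U^2 = E^2 eps1.  Writing
  eps1 = L M with M = diag(1, i), eps1 acts as M on L-invariant elements, and M E = -U M,
  M E^2 = U^2 M.  Hence W|eps1 is contained in W; as P|eps1 = P(iz, -iw) has order four, this is
  an equality, and the projectors (1/4) sum_j e^(-j) eps1^j for the fourth roots of unity e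
  split W into the four eigenspaces.
*)
theory Submission
  imports Defs "HOL-Computational_Algebra.Polynomial"
begin

section \<open>Polynomials in z and its conjugate\<close>

lemma polyfun_eq_0_off_finite:
  fixes c :: "nat \<Rightarrow> 'a::{idom, real_normed_div_algebra}"
  assumes "finite A" "\<And>x. x \<notin> A \<Longrightarrow> (\<Sum>i\<le>n. c i * x ^ i) = 0" "i \<le> n"
  shows "c i = 0"
proof (rule ccontr)
  assume "c i \<noteq> 0"
  then have "finite {x. (\<Sum>i\<le>n. c i * x ^ i) = 0}"
    using polyfun_roots_finite assms(3) by blast
  moreover have "UNIV - A \<subseteq> {x. (\<Sum>i\<le>n. c i * x ^ i) = 0}"
    using assms(2) by blast
  ultimately have "finite (UNIV - A)"
    by (rule finite_subset[rotated])
  then show False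
    using assms(1) infinite_UNIV_char_0[where 'a='a] by simp
qed

lemma poly2_eq_0_off_finite:
  assumes "finite A" "finite B"
    and "\<And>z w. z \<notin> A \<Longrightarrow> w \<notin> B \<Longrightarrow> poly2 k c z w = 0"
    and "i \<le> k" "j \<le> k"
  shows "c i j = 0"
proof -
  have "(\<Sum>j\<le>k. c i j * w ^ j) = 0" if "w \<notin> B" for w
  proof (rule polyfun_eq_0_off_finite[OF assms(1) _ assms(4)])
    show "(\<Sum>i\<le>k. (\<Sum>j\<le>k. c i j * w ^ j) * z ^ i) = 0" if "z \<notin> A" for z
      using assms(3)[OF that \<open>w \<notin> B\<close>]
      by (simp add: poly2_def sum_distrib_left sum_distrib_right mult_ac)
  qed
  then show ?thesis
    using polyfun_eq_0_off_finite[OF assms(2) _ assms(5)] by blast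
qed

lemma poly2_lincomb:
  "(\<lambda>z w. a * poly2 k c z w + poly2 k d z w) = poly2 k (\<lambda>i j. a * c i j + d i j)"
  by (simp add: poly2_def sum.distrib sum_distrib_left algebra_simps)

lemma Vkk_lincomb: "P \<in> Vkk k \<Longrightarrow> Q \<in> Vkk k \<Longrightarrow> (\<lambda>z w. a * P z w + Q z w) \<in> Vkk k"
  unfolding Vkk_def by (auto simp: poly2_lincomb)

lemma Vkk_zero: "(\<lambda>z w. 0) \<in> Vkk k"
  unfolding Vkk_def poly2_def by (auto intro: exI[of _ "\<lambda>i j. 0"])

lemma Vkk_sum:
  "finite A \<Longrightarrow> (\<And>x. x \<in> A \<Longrightarrow> F x \<in> Vkk k) \<Longrightarrow> (\<lambda>z w. \<Sum>x\<in>A. F x z w) \<in> Vkk k"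
  by (induction A rule: finite_induct) (use Vkk_zero Vkk_lincomb[of _ k _ 1] in auto)

lemma Vkk_eq_off_finite:
  assumes "P \<in> Vkk k" "Q \<in> Vkk k" "finite A" "finite B"
    and "\<And>z w. z \<notin> A \<Longrightarrow> w \<notin> B \<Longrightarrow> P z w = Q z w"
  shows "P = Q"
proof -
  obtain c d where P: "P = poly2 k c" and Q: "Q = poly2 k d"
    using assms(1,2) unfolding Vkk_def by auto
  have "c i j = d i j" if "i \<le> k" "j \<le> k" for i j
  proof -
    have "poly2 k (\<lambda>i j. -1 * d i j + c i j) z w = 0" if "z \<notin> A" "w \<notin> B" for z w
      using assms(5)[OF that] unfolding P Q poly2_lincomb[symmetric] by simp
    then show ?thesis
      using poly2_eq_0_off_finite[OF assms(3,4) _ that] by fastforce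
  qed
  then show ?thesis
    unfolding P Q poly2_def by (intro ext sum.cong) auto
qed

lemma poly2_coeffs2: "P \<in> Vkk k \<Longrightarrow> poly2 k (coeffs2 k P) = P"
  unfolding Vkk_def coeffs2_def by (metis (mono_tags) mem_Collect_eq someI)

lemma coeffs2_poly2:
  assumes "i \<le> k" "j \<le> k"
  shows "coeffs2 k (poly2 k c) i j = c i j"
proof -
  have "poly2 k (coeffs2 k (poly2 k c)) = poly2 k c"
    by (rule poly2_coeffs2) (auto simp: Vkk_def)
  then have "poly2 k (\<lambda>i j. -1 * c i j + coeffs2 k (poly2 k c) i j) z w = 0" for z w
    unfolding poly2_lincomb[symmetric] by simp
  then show ?thesis
    using poly2_eq_0_off_finite[of "{}" "{}", OF _ _ _ assms] by fastforce
qed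

section \<open>The slash action\<close>

lemma coeffs2_lincomb:
  assumes "P \<in> Vkk k" "Q \<in> Vkk k" "i \<le> k" "j \<le> k"
  shows "coeffs2 k (\<lambda>z w. a * P z w + Q z w) i j = a * coeffs2 k P i j + coeffs2 k Q i j"
  using coeffs2_poly2[OF assms(3,4), of "\<lambda>i j. a * coeffs2 k P i j + coeffs2 k Q i j"]
  by (simp add: poly2_lincomb[symmetric] poly2_coeffs2 assms(1,2))

lemma slash_lincomb:
  assumes "P \<in> Vkk k" "Q \<in> Vkk k"
  shows "slash k (\<lambda>z w. a * P z w + Q z w) g = (\<lambda>z w. a * slash k P g z w + slash k Q g z w)"
proof (intro ext)
  fix z w
  obtain a' b c e where g: "g = (a', b, c, e)"
    by (cases g)
  show "slash k (\<lambda>z w. a * P z w + Q z w) g z w = a * slash k P g z w + slash k Q g z w"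
    unfolding slash_def g prod.case sum_distrib_left sum.distrib[symmetric]
    using coeffs2_lincomb[OF assms] by (intro sum.cong refl) (simp add: algebra_simps)
qed

lemma poly_eq_sum_upto:
  fixes p :: "'a::comm_semiring_1 poly"
  assumes "degree p \<le> k"
  shows "poly p z = (\<Sum>i\<le>k. coeff p i * z ^ i)"
  unfolding poly_altdef using assms
  by (intro sum.mono_neutral_left) (auto simp: coeff_eq_0)

lemma Vkk_poly_times_poly:
  "degree p \<le> k \<Longrightarrow> degree q \<le> k \<Longrightarrow> (\<lambda>z w. poly p z * poly q w) \<in> Vkk k"
  unfolding Vkk_def poly2_def
  by (auto simp: poly_eq_sum_upto sum_product mult_ac intro!: exI[of _ "\<lambda>i j. coeff p i * coeff q j"])

lemma degree_linear_powers:
  fixes a b c e :: "'a::comm_semiring_1"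
  assumes "i \<le> k"
  shows "degree ([:b, a:] ^ i * [:e, c:] ^ (k - i)) \<le> k"
proof -
  have "degree ([:b, a:] ^ i * [:e, c:] ^ (k - i)) \<le> degree [:b, a:] * i + degree [:e, c:] * (k - i)"
    by (intro order.trans[OF degree_mult_le] add_mono degree_power_le)
  also have "\<dots> \<le> 1 * i + 1 * (k - i)"
    by (intro add_mono mult_right_mono) auto
  finally show ?thesis
    using assms by simp
qed

lemma slash_in_Vkk: "slash k P g \<in> Vkk k"
proof -
  obtain a b c e where g: "g = (a, b, c, e)"
    by (cases g)
  define p where "p i = [:b, a:] ^ i * [:e, c:] ^ (k - i)" for i
  define q where "q j = [:cnj b, cnj a:] ^ j * [:cnj e, cnj c:] ^ (k - j)" for j
  have "slash k P g = (\<lambda>z w. \<Sum>i\<le>k. \<Sum>j\<le>k. coeffs2 k P i j * (poly (p i) z * poly (q j) w))"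
    unfolding slash_def g p_def q_def by (simp add: algebra_simps)
  also have "\<dots> \<in> Vkk k"
  proof (intro Vkk_sum finite_atMost)
    fix i j
    assume "i \<in> {..k}" "j \<in> {..k}"
    then have "degree (p i) \<le> k" "degree (q j) \<le> k"
      unfolding p_def q_def by (simp_all add: degree_linear_powers)
    then show "(\<lambda>z w. coeffs2 k P i j * (poly (p i) z * poly (q j) w)) \<in> Vkk k"
      using Vkk_lincomb[OF Vkk_poly_times_poly Vkk_zero] by simp
  qed
  finally show ?thesis .
qed

lemma slash_mI: "P \<in> Vkk k \<Longrightarrow> slash k P mI = P"
  by (subst (2) poly2_coeffs2[symmetric]) (auto simp: slash_def mI_def poly2_def)

definition twist :: "(complex \<Rightarrow> complex \<Rightarrow> complex) \<Rightarrow> complex \<Rightarrow> complex \<Rightarrow> complex" where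
  "twist P = (\<lambda>z w. P (\<i> * z) (cnj \<i> * w))"

lemma slash_eps1: "P \<in> Vkk k \<Longrightarrow> slash k P eps1 = twist P"
  by (subst (2) poly2_coeffs2[symmetric]) (auto simp: slash_def eps1_def twist_def poly2_def)

fun msmult :: "complex \<Rightarrow> mat2 \<Rightarrow> mat2" where
  "msmult l (a, b, c, e) = (l * a, l * b, l * c, l * e)"

lemma slash_msmult:
  assumes "l * cnj l = 1"
  shows "slash k P (msmult l g) = slash k P g"
proof -
  obtain a b c e where g: "g = (a, b, c, e)"
    by (cases g)
  have lk: "l ^ k * cnj l ^ k = 1"
    using assms by (metis power_mult_distrib power_one)
  have scale: "(l * x) ^ i * (l * y) ^ (k - i) = l ^ k * (x ^ i * y ^ (k - i))" if "i \<le> k"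
    for l x y :: complex and i
    using that by (simp add: power_mult_distrib power_add[symmetric] mult_ac)
  have "(l * x) ^ i * ((l * y) ^ (k - i) * ((cnj l * u) ^ j * (cnj l * v) ^ (k - j)))
      = x ^ i * (y ^ (k - i) * (u ^ j * v ^ (k - j)))" if "i \<le> k" "j \<le> k" for x y u v i j
    using scale[OF that(1), of l x y] scale[OF that(2), of "cnj l" u v] lk
    by (simp add: mult.assoc[symmetric])
  then show ?thesis
    unfolding slash_def g msmult.simps prod.case
    by (intro ext sum.cong refl) (simp add: mult.assoc distrib_left[symmetric])
qed

fun mdet :: "mat2 \<Rightarrow> complex" where
  "mdet (a, b, c, e) = a * e - b * c"

fun mcnj :: "mat2 \<Rightarrow> mat2" where
  "mcnj (a, b, c, e) = (cnj a, cnj b, cnj c, cnj e)"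

fun jfac :: "mat2 \<Rightarrow> complex \<Rightarrow> complex" where
  "jfac (a, b, c, e) z = c * z + e"

fun mobius :: "mat2 \<Rightarrow> complex \<Rightarrow> complex" where
  "mobius (a, b, c, e) z = (a * z + b) / (c * z + e)"

lemma mdet_mmul: "mdet (mmul g h) = mdet g * mdet h"
  by (cases g, cases h) (simp add: algebra_simps)

lemma mdet_mcnj: "mdet (mcnj g) = cnj (mdet g)"
  by (cases g) simp

lemma mcnj_mmul: "mcnj (mmul g h) = mmul (mcnj g) (mcnj h)"
  by (cases g, cases h) simp

lemma jfac_mmul: "jfac h z \<noteq> 0 \<Longrightarrow> jfac (mmul g h) z = jfac g (mobius h z) * jfac h z"
  by (cases g, cases h) (simp add: field_simps)

lemma mobius_mmul:
  assumes "jfac h z \<noteq> 0"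
  shows "mobius (mmul g h) z = mobius g (mobius h z)"
proof -
  obtain a b c e where g: "g = (a, b, c, e)"
    by (cases g)
  obtain a' b' c' e' where h: "h = (a', b', c', e')"
    by (cases h)
  define J where "J = c' * z + e'"
  define u where "u = a' * z + b'"
  have "J \<noteq> 0"
    using assms by (simp add: h J_def)
  then have "a * (u / J) + b = (a * u + b * J) / J" "c * (u / J) + e = (c * u + e * J) / J"
    by (simp_all add: field_simps)
  then show ?thesis
    using \<open>J \<noteq> 0\<close> by (simp add: g h flip: J_def u_def) (simp add: J_def u_def algebra_simps)
qed

lemma finite_jfac_zeros:
  assumes "mdet g \<noteq> 0"
  shows "finite {z. jfac g z = 0}"
proof -
  obtain a b c e where g: "g = (a, b, c, e)"
    by (cases g)
  have "{z. jfac g z = 0} \<subseteq> {- e / c}"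
    using assms by (cases "c = 0") (auto simp: g field_simps add_eq_0_iff)
  then show ?thesis
    by (rule finite_subset) simp
qed

lemma slash_eq_rational:
  assumes "P \<in> Vkk k" "jfac g z \<noteq> 0" "jfac (mcnj g) w \<noteq> 0"
  shows "slash k P g z w = jfac g z ^ k * jfac (mcnj g) w ^ k * P (mobius g z) (mobius (mcnj g) w)"
proof -
  have split: "u ^ i * J ^ (k - i) = J ^ k * (u / J) ^ i" if "J \<noteq> 0" "i \<le> k" for u J :: complex and i
  proof -
    have "J ^ k = J ^ i * J ^ (k - i)"
      using that(2) by (simp flip: power_add)
    then show ?thesis
      using that(1) by (simp add: power_divide)
  qed
  obtain a b c e where g: "g = (a, b, c, e)"
    by (cases g)
  let ?C = "coeffs2 k P"
  have "slash k P g z w = (\<Sum>i\<le>k. \<Sum>j\<le>k. ?C i j * ((a * z + b) ^ i * (c * z + e) ^ (k - i))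
      * ((cnj a * w + cnj b) ^ j * (cnj c * w + cnj e) ^ (k - j)))"
    by (simp add: slash_def g mult.assoc)
  also have "\<dots> = (\<Sum>i\<le>k. \<Sum>j\<le>k. ?C i j * ((c * z + e) ^ k * ((a * z + b) / (c * z + e)) ^ i)
      * ((cnj c * w + cnj e) ^ k * ((cnj a * w + cnj b) / (cnj c * w + cnj e)) ^ j))"
    using assms(2,3) by (intro sum.cong refl) (simp add: g split)
  also have "\<dots> = jfac g z ^ k * jfac (mcnj g) w ^ k * poly2 k ?C (mobius g z) (mobius (mcnj g) w)"
    by (simp add: g poly2_def sum_distrib_left mult_ac)
  finally show ?thesis
    by (simp add: poly2_coeffs2 assms(1))
qed

lemma slash_mmul:
  assumes P: "P \<in> Vkk k" and "mdet g \<noteq> 0" "mdet h \<noteq> 0"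
  shows "slash k (slash k P g) h = slash k P (mmul g h)"
proof (rule Vkk_eq_off_finite[OF slash_in_Vkk slash_in_Vkk])
  have "mdet (mmul g h) \<noteq> 0" "mdet (mcnj h) \<noteq> 0" "mdet (mcnj (mmul g h)) \<noteq> 0"
    using assms by (simp_all add: mdet_mmul mdet_mcnj)
  then show "finite ({z. jfac h z = 0} \<union> {z. jfac (mmul g h) z = 0})"
    and "finite ({w. jfac (mcnj h) w = 0} \<union> {w. jfac (mcnj (mmul g h)) w = 0})"
    using assms by (simp_all add: finite_jfac_zeros)
  fix z w
  assume z: "z \<notin> {z. jfac h z = 0} \<union> {z. jfac (mmul g h) z = 0}"
    and w: "w \<notin> {w. jfac (mcnj h) w = 0} \<union> {w. jfac (mcnj (mmul g h)) w = 0}"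
  have hz: "jfac h z \<noteq> 0" and gz: "jfac g (mobius h z) \<noteq> 0"
    using z jfac_mmul[of h z g] by auto
  have hw: "jfac (mcnj h) w \<noteq> 0" and gw: "jfac (mcnj g) (mobius (mcnj h) w) \<noteq> 0"
    using w jfac_mmul[of "mcnj h" w "mcnj g"] by (auto simp: mcnj_mmul)
  have "slash k (slash k P g) h z w
      = jfac h z ^ k * jfac (mcnj h) w ^ k * slash k P g (mobius h z) (mobius (mcnj h) w)"
    by (rule slash_eq_rational[OF slash_in_Vkk hz hw])
  also have "\<dots> = (jfac g (mobius h z) * jfac h z) ^ k * (jfac (mcnj g) (mobius (mcnj h) w) * jfac (mcnj h) w) ^ k
      * P (mobius g (mobius h z)) (mobius (mcnj g) (mobius (mcnj h) w))"
    by (simp add: slash_eq_rational[OF P gz gw] power_mult_distrib mult_ac)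
  also have "\<dots> = slash k P (mmul g h) z w"
    using hz hw gz gw
    by (simp add: slash_eq_rational[OF P] jfac_mmul mobius_mmul mcnj_mmul)
  finally show "slash k (slash k P g) h z w = slash k P (mmul g h) z w" .
qed

lemma slash_intertwine:
  assumes P: "P \<in> Vkk k" and det: "mdet h \<noteq> 0" "mdet g \<noteq> 0" "mdet g' \<noteq> 0"
    and l: "l * cnj l = 1" "mmul h g = msmult l (mmul g' h)"
  shows "slash k (slash k P h) g = slash k (slash k P g') h"
  using slash_mmul[OF P det(1,2)] slash_mmul[OF P det(3,1)] slash_msmult[OF l(1)] l(2) by simp

section \<open>Kernels of group ring elements\<close>

lemma slash_zero: "slash k (\<lambda>z w. 0) g = (\<lambda>z w. 0)"
proof -
  have "coeffs2 k (poly2 k (\<lambda>i j. 0)) i j = 0" if "i \<le> k" "j \<le> k" for i j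
    using coeffs2_poly2[OF that] .
  then show ?thesis
    by (simp add: slash_def poly2_def split: prod.split)
qed

lemma slashR_Nil: "slashR k P [] = (\<lambda>z w. 0)"
  by (simp add: slashR_def)

lemma slashR_Cons: "slashR k P ((n, g) # X) = (\<lambda>z w. n * slash k P g z w + slashR k P X z w)"
  by (simp add: slashR_def)

lemma slashR_in_Vkk: "slashR k P X \<in> Vkk k"
  by (induction X) (auto simp: slashR_Nil slashR_Cons Vkk_zero Vkk_lincomb slash_in_Vkk)

lemma slashR_lincomb:
  assumes "P \<in> Vkk k" "Q \<in> Vkk k"
  shows "slashR k (\<lambda>z w. a * P z w + Q z w) X = (\<lambda>z w. a * slashR k P X z w + slashR k Q X z w)"
proof (induction X)
  case Nil
  then show ?case by (simp add: slashR_Nil)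
next
  case (Cons ng X)
  then show ?case
    using slash_lincomb[OF assms, of a] by (cases ng) (simp add: slashR_Cons fun_eq_iff algebra_simps)
qed

lemma kerR_lincomb: "P \<in> kerR k X \<Longrightarrow> Q \<in> kerR k X \<Longrightarrow> (\<lambda>z w. a * P z w + Q z w) \<in> kerR k X"
  by (simp add: kerR_def slashR_lincomb Vkk_lincomb)

lemma slash_slashR:
  assumes "P \<in> Vkk k"
  shows "slash k (slashR k P X) h = (\<lambda>z w. \<Sum>(n, g)\<leftarrow>X. n * slash k (slash k P g) h z w)"
proof (induction X)
  case Nil
  then show ?case by (simp add: slashR_Nil slash_zero)
next
  case (Cons ng X)
  then show ?case
    by (cases ng) (simp add: slashR_Cons slash_lincomb slash_in_Vkk slashR_in_Vkk)
qed

lemma slash_kerR_conj: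
  assumes P: "P \<in> kerR k Y" and h: "mdet h \<noteq> 0"
    and XY: "list_all2 (\<lambda>(n, g) (m, g'). n = m \<and> mdet g \<noteq> 0 \<and> mdet g' \<noteq> 0 \<and>
               (\<exists>l. l * cnj l = 1 \<and> mmul h g = msmult l (mmul g' h))) X Y"
  shows "slash k P h \<in> kerR k X"
proof -
  have PV: "P \<in> Vkk k"
    using P by (simp add: kerR_def)
  from XY have "slashR k (slash k P h) X = (\<lambda>z w. \<Sum>(n, g')\<leftarrow>Y. n * slash k (slash k P g') h z w)"
  proof (induction rule: list_all2_induct)
    case Nil
    then show ?case by (simp add: slashR_Nil)
  next
    case (Cons ng X mg' Y)
    then show ?case
      using slash_intertwine[OF PV h]
      by (cases ng, cases mg') (auto simp: slashR_Cons)
  qed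
  also have "\<dots> = slash k (slashR k P Y) h"
    by (simp add: slash_slashR PV)
  also have "\<dots> = (\<lambda>z w. 0)"
    using P unfolding kerR_def by (simp add: slash_zero)
  finally show ?thesis
    by (simp add: kerR_def slash_in_Vkk)
qed

section \<open>Invariance of W under eps1\<close>

definition mM :: mat2 where "mM = (1, 0, 0, \<i>)"

lemma mdet_generators:
  "mdet mI \<noteq> 0" "mdet mS \<noteq> 0" "mdet mL \<noteq> 0" "mdet mU \<noteq> 0" "mdet mE \<noteq> 0"
  "mdet eps1 \<noteq> 0" "mdet mM \<noteq> 0"
  by (simp_all add: mI_def mS_def mL_def mU_def mE_def mT_def mTw_def eps1_def mM_def)

lemma mmul_mI [simp]: "mmul mI g = g" "mmul g mI = g"
  by (cases g, simp add: mI_def)+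

lemma msmult_1 [simp]: "msmult 1 g = g"
  by (cases g) simp

lemma eps1_conj_relations:
  "mmul eps1 mS = msmult (-1) (mmul (mmul mS mL) eps1)"
  "mmul eps1 mL = mmul mL eps1"
  "mmul eps1 mU = msmult (-1) (mmul mE eps1)"
  "mmul eps1 (mmul mU mU) = mmul (mmul mE mE) eps1"
  by (simp_all add: mS_def mL_def mU_def mE_def mT_def mTw_def eps1_def)

lemma eps1_eq_mL_mM: "eps1 = mmul mL mM"
  by (simp add: mL_def eps1_def mM_def)

lemma mM_conj_relations:
  "mmul mM mE = msmult (-1) (mmul mU mM)"
  "mmul mM (mmul mE mE) = mmul (mmul mU mU) mM"
  by (simp_all add: mU_def mE_def mT_def mTw_def mS_def mL_def mM_def)

lemma kerR_mL_iff: "P \<in> kerR k [(1, mI), (-1, mL)] \<longleftrightarrow> P \<in> Vkk k \<and> slash k P mL = P"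
  by (auto simp: kerR_def slashR_def slash_mI fun_eq_iff)

lemma kerR_mS_mL:
  assumes "P \<in> kerR k [(1, mI), (1, mS)]" "slash k P mL = P"
  shows "P \<in> kerR k [(1, mI), (1, mmul mS mL)]"
proof -
  have PV: "P \<in> Vkk k"
    using assms(1) by (simp add: kerR_def)
  have "slashR k P [(1, mI), (1, mmul mS mL)] = slash k (slashR k P [(1, mI), (1, mS)]) mL"
    unfolding slash_slashR[OF PV]
    by (simp add: slashR_def slash_mI PV slash_mmul mdet_generators assms(2))
  also have "\<dots> = (\<lambda>z w. 0)"
    using assms(1) by (simp add: kerR_def slash_zero)
  finally show ?thesis
    using PV by (simp add: kerR_def)
qed

lemma slash_mM_eq_twist:
  assumes "P \<in> Vkk k" "slash k P mL = P"
  shows "slash k P mM = twist P"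
  using slash_mmul[OF assms(1) mdet_generators(3,7)]
  by (simp add: slash_eps1 assms eps1_eq_mL_mM[symmetric])

lemma Wkk_lincomb: "P \<in> Wkk k \<Longrightarrow> Q \<in> Wkk k \<Longrightarrow> (\<lambda>z w. a * P z w + Q z w) \<in> Wkk k"
  by (simp add: Wkk_def kerR_lincomb)

lemma twist_in_Wkk:
  assumes "P \<in> Wkk k"
  shows "twist P \<in> Wkk k"
proof -
  have PS: "P \<in> kerR k [(1, mI), (1, mS)]" and PL: "P \<in> kerR k [(1, mI), (-1, mL)]"
    and PU: "P \<in> kerR k [(1, mI), (1, mU), (1, mmul mU mU)]"
    and PE: "P \<in> kerR k [(1, mI), (1, mE), (1, mmul mE mE)]"
    using assms by (simp_all add: Wkk_def)
  have PV: "P \<in> Vkk k" and P_mL: "slash k P mL = P"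
    using PL by (simp_all add: kerR_mL_iff)
  have twist_eps1: "twist P = slash k P eps1"
    by (simp add: slash_eps1 PV)
  note conj = slash_kerR_conj[where h = eps1, OF _ mdet_generators(6)]
    slash_kerR_conj[where h = mM, OF _ mdet_generators(7)]
  have "twist P \<in> kerR k [(1, mI), (1, mS)]"
    unfolding twist_eps1 using mdet_generators eps1_conj_relations
    by (intro conj(1)[OF kerR_mS_mL[OF PS P_mL]]) (auto simp: mdet_mmul intro: exI[of _ 1] exI[of _ "-1"])
  moreover have "twist P \<in> kerR k [(1, mI), (-1, mL)]"
    unfolding twist_eps1 using mdet_generators eps1_conj_relations
    by (intro conj(1)[OF PL]) (auto simp: mdet_mmul intro: exI[of _ 1])
  moreover have "twist P \<in> kerR k [(1, mI), (1, mU), (1, mmul mU mU)]"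
    unfolding twist_eps1 using mdet_generators eps1_conj_relations
    by (intro conj(1)[OF PE]) (auto simp: mdet_mmul intro: exI[of _ 1] exI[of _ "-1"])
  moreover have "twist P \<in> kerR k [(1, mI), (1, mE), (1, mmul mE mE)]"
    unfolding slash_mM_eq_twist[OF PV P_mL, symmetric] using mdet_generators mM_conj_relations
    by (intro conj(2)[OF PU]) (auto simp: mdet_mmul intro: exI[of _ 1] exI[of _ "-1"])
  ultimately show ?thesis
    by (simp add: Wkk_def)
qed

section \<open>Eigenspace decomposition\<close>

lemma funpow_twist: "(twist ^^ n) P = (\<lambda>z w. P (\<i> ^ n * z) (cnj \<i> ^ n * w))"
  by (induction n) (simp_all add: twist_def mult_ac)

lemma funpow_twist_4: "(twist ^^ 4) P = P"
  unfolding funpow_twist by (simp add: power4_eq_xxxx)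

lemma twist_image_eq:
  assumes "\<And>P. P \<in> W \<Longrightarrow> twist P \<in> W"
  shows "twist ` W = W"
proof
  show "twist ` W \<subseteq> W"
    using assms by blast
  show "W \<subseteq> twist ` W"
  proof
    fix P
    assume "P \<in> W"
    then have "(twist ^^ 3) P \<in> W"
      using assms by (simp add: eval_nat_numeral)
    moreover have "P = twist ((twist ^^ 3) P)"
      using funpow_twist_4[of P] by (simp add: eval_nat_numeral)
    ultimately show "P \<in> twist ` W"
      by blast
  qed
qed

lemma funpow_twist_eigen:
  assumes "twist p = (\<lambda>z w. e * p z w)"
  shows "(twist ^^ n) p = (\<lambda>z w. e ^ n * p z w)"
proof (induction n)
  case (Suc n)
  have "twist (\<lambda>z w. e ^ n * p z w) = (\<lambda>z w. e ^ n * twist p z w)"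
    by (simp add: twist_def)
  then show ?case
    using Suc assms by (simp add: mult_ac)
qed simp

definition twist_proj :: "complex \<Rightarrow> (complex \<Rightarrow> complex \<Rightarrow> complex) \<Rightarrow> complex \<Rightarrow> complex \<Rightarrow> complex" where
  "twist_proj e P = (\<lambda>z w. \<Sum>j<4. inverse e ^ j / 4 * (twist ^^ j) P z w)"

lemma twist_twist_proj:
  assumes "e ^ 4 = 1"
  shows "twist (twist_proj e P) = (\<lambda>z w. e * twist_proj e P z w)"
proof -
  have e4: "e * (e * (e * (e * x))) = x" for x
    using assms by (simp add: eval_nat_numeral mult.assoc[symmetric])
  have "inverse e = e ^ 3"
    using e4[of 1] by (intro inverse_unique) (simp add: eval_nat_numeral)
  then show ?thesis
    unfolding twist_proj_def funpow_twist
    by (simp add: twist_def eval_nat_numeral e4 algebra_simps)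
qed

lemma twist_proj_eigen:
  assumes "e ^ 4 = 1" "e' ^ 4 = 1" "twist p = (\<lambda>z w. e' * p z w)"
  shows "twist_proj e p = (if e' = e then p else (\<lambda>z w. 0))"
proof -
  define x where "x = inverse e * e'"
  have "e \<noteq> 0"
    using assms(1) by auto
  then have x1: "x = 1 \<longleftrightarrow> e' = e"
    by (auto simp: x_def field_simps)
  have x4: "x ^ 4 = 1"
    using assms(1,2) by (simp add: x_def power_mult_distrib power_inverse)
  have "twist_proj e p = (\<lambda>z w. (\<Sum>j<4. x ^ j) / 4 * p z w)"
    unfolding twist_proj_def funpow_twist_eigen[OF assms(3)] x_def
    by (simp add: sum_divide_distrib sum_distrib_left power_mult_distrib mult_ac)
  then show ?thesis
    using x1 x4 by (simp add: sum_gp_strict)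
qed

lemma twist_proj_add:
  "twist_proj e (\<lambda>z w. p z w + q z w) = (\<lambda>z w. twist_proj e p z w + twist_proj e q z w)"
  by (simp add: twist_proj_def funpow_twist sum.distrib algebra_simps)

lemma twist_proj_sum:
  "P = (\<lambda>z w. twist_proj 1 P z w + twist_proj (-1) P z w + twist_proj \<i> P z w + twist_proj (-\<i>) P z w)"
  by (simp add: twist_proj_def funpow_twist eval_nat_numeral field_simps)

lemma twist_eigen_decomposition:
  fixes W :: "(complex \<Rightarrow> complex \<Rightarrow> complex) set"
  assumes lincomb: "\<And>P Q a. P \<in> W \<Longrightarrow> Q \<in> W \<Longrightarrow> (\<lambda>z w. a * P z w + Q z w) \<in> W"
    and twist: "\<And>P. P \<in> W \<Longrightarrow> twist P \<in> W"
    and P: "P \<in> W"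
  defines "E e \<equiv> {p \<in> W. twist p = (\<lambda>z w. e * p z w)}"
  shows "\<exists>!(p1, p2, p3, p4). p1 \<in> E 1 \<and> p2 \<in> E (-1) \<and> p3 \<in> E \<i> \<and> p4 \<in> E (-\<i>)
           \<and> P = (\<lambda>z w. p1 z w + p2 z w + p3 z w + p4 z w)"
proof -
  have roots: "(1::complex) ^ 4 = 1" "(-1::complex) ^ 4 = 1" "\<i> ^ 4 = 1" "(-\<i>) ^ 4 = 1"
    by (simp_all add: eval_nat_numeral)
  have "(\<lambda>z w. \<Sum>j<n. c j * (twist ^^ j) P z w) \<in> W" for c n
  proof (induction n)
    case 0
    show ?case
      using lincomb[OF P P, of "-1"] by simp
  next
    case (Suc n)
    have "(twist ^^ n) P \<in> W"
      by (induction n) (simp_all add: P twist)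
    then show ?case
      using lincomb[OF _ Suc, of "(twist ^^ n) P" "c n"] by (simp add: add.commute)
  qed
  then have "twist_proj e P \<in> W" for e
    unfolding twist_proj_def .
  then have proj_in_E: "twist_proj e P \<in> E e" if "e ^ 4 = 1" for e
    unfolding E_def using twist_twist_proj[OF that] by simp
  show ?thesis
  proof (rule ex1I[of _ "(twist_proj 1 P, twist_proj (-1) P, twist_proj \<i> P, twist_proj (-\<i>) P)"])
    show "case (twist_proj 1 P, twist_proj (-1) P, twist_proj \<i> P, twist_proj (-\<i>) P) of
        (p1, p2, p3, p4) \<Rightarrow> p1 \<in> E 1 \<and> p2 \<in> E (-1) \<and> p3 \<in> E \<i> \<and> p4 \<in> E (-\<i>)
           \<and> P = (\<lambda>z w. p1 z w + p2 z w + p3 z w + p4 z w)"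
      using proj_in_E[OF roots(1)] proj_in_E[OF roots(2)] proj_in_E[OF roots(3)] proj_in_E[OF roots(4)]
      by (simp add: twist_proj_sum[symmetric])
  next
    fix x
    assume "case x of (p1, p2, p3, p4) \<Rightarrow> p1 \<in> E 1 \<and> p2 \<in> E (-1) \<and> p3 \<in> E \<i> \<and> p4 \<in> E (-\<i>)
           \<and> P = (\<lambda>z w. p1 z w + p2 z w + p3 z w + p4 z w)"
    then obtain q1 q2 q3 q4 where x: "x = (q1, q2, q3, q4)"
      and q: "q1 \<in> E 1" "q2 \<in> E (-1)" "q3 \<in> E \<i>" "q4 \<in> E (-\<i>)"
      and P_sum: "P = (\<lambda>z w. q1 z w + q2 z w + q3 z w + q4 z w)"
      by (cases x) auto
    have "twist_proj e P = (\<lambda>z w. twist_proj e q1 z w + twist_proj e q2 z w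
        + twist_proj e q3 z w + twist_proj e q4 z w)" for e
      unfolding P_sum by (simp add: twist_proj_add)
    moreover have "twist q1 = (\<lambda>z w. 1 * q1 z w)" "twist q2 = (\<lambda>z w. -1 * q2 z w)"
      "twist q3 = (\<lambda>z w. \<i> * q3 z w)" "twist q4 = (\<lambda>z w. -\<i> * q4 z w)"
      using q by (simp_all add: E_def)
    note eigen = twist_proj_eigen[OF _ roots(1) this(1)] twist_proj_eigen[OF _ roots(2) this(2)]
      twist_proj_eigen[OF _ roots(3) this(3)] twist_proj_eigen[OF _ roots(4) this(4)]
    ultimately show "x = (twist_proj 1 P, twist_proj (-1) P, twist_proj \<i> P, twist_proj (-\<i>) P)"
      using roots by (simp add: x eigen complex_eq_iff)
  qed
qed

lemma Wkk_subset_Vkk: "Wkk k \<subseteq> Vkk k"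
  by (auto simp: Wkk_def kerR_def)

lemma Wkk_e_eq: "Wkk_e k e = {p \<in> Wkk k. twist p = (\<lambda>z w. e * p z w)}"
  using Wkk_subset_Vkk by (auto simp: Wkk_e_def Vkk_e_def twist_def fun_eq_iff)

theorem proposition5p2:
  fixes k :: nat
  assumes "odd k"
  shows "(\<lambda>P. slash k P eps1) ` Wkk k = Wkk k
     \<and> (\<forall>P \<in> Wkk k. \<exists>!(p1, p2, p3, p4).
           p1 \<in> Wkk_e k 1 \<and> p2 \<in> Wkk_e k (-1) \<and> p3 \<in> Wkk_e k \<i> \<and> p4 \<in> Wkk_e k (-\<i>)
           \<and> P = (\<lambda>z w. p1 z w + p2 z w + p3 z w + p4 z w))"
proof
  have "slash k P eps1 = twist P" if "P \<in> Wkk k" for P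
    using that Wkk_subset_Vkk[of k] by (simp add: slash_eps1 subset_eq)
  then have "(\<lambda>P. slash k P eps1) ` Wkk k = twist ` Wkk k"
    by (rule image_cong[OF refl])
  then show "(\<lambda>P. slash k P eps1) ` Wkk k = Wkk k"
    using twist_image_eq[OF twist_in_Wkk] by simp
  show "\<forall>P \<in> Wkk k. \<exists>!(p1, p2, p3, p4).
           p1 \<in> Wkk_e k 1 \<and> p2 \<in> Wkk_e k (-1) \<and> p3 \<in> Wkk_e k \<i> \<and> p4 \<in> Wkk_e k (-\<i>)
           \<and> P = (\<lambda>z w. p1 z w + p2 z w + p3 z w + p4 z w)"
    unfolding Wkk_e_eq by (intro ballI twist_eigen_decomposition[OF Wkk_lincomb twist_in_Wkk])
qed

end
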